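(* Let $c,d\in\mathbb{N}$ and $I=\mathbb{N}^d\times[c]$. Then every $\mathrm{Sym}$-invariant lattice $L\subseteq\mathbb{Z}^{(I)}$ has a finite equivariant generating set, i.e. there is a finite set $\mathcal{B}\subseteq L$ such that $L$ is generated as an abelian group by $\mathrm{Sym}(\mathcal{B})=\{\sigma(\mathbf{u})\mid\sigma\in\mathrm{Sym},\mathbf{u}\in\mathcal{B}\}$.
   Context: $\mathbb{N}=\{1,2,\dots\}$, $[c]=\{1,\dots,c\}$. $\mathbb{Z}^{(I)}$ is the free abelian group with basis $I$ (finitely supported integer vectors indexed by $I$), with standard basis $\mathbf{e}_{\mathbf{i},j}$, $\mathbf{i}\in\mathbb{N}^d$, $j\in[c]$; a lattice is any subgroup of $\mathbb{Z}^{(I)}$. $\mathrm{Sym}$ is the group of permutations of $\mathbb{N}$ fixing all but finitely many elements; it acts on $\mathbb{Z}^{(I)}$ by the linear extension of $\sigma(\mathbf{e}_{(i_1,\dots,i_d),j})=\mathbf{e}_{(\sigma(i_1),\dots,\sigma(i_d)),j}$. A lattice $L$ is $\mathrm{Sym}$-invariant if $\sigma(L)\subseteq L$ for all $\sigma\in\mathrm{Sym}$. *)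

theory Defs
  imports Main "HOL-Library.Function_Algebras"
begin

text \<open>Indices: a multi-index i in N^d is a list of length d with entries \<ge> 1,
  paired with a colour j in [c] = {1..c}. Here N = {1,2,...}.\<close>

type_synonym idx = "nat list \<times> nat"

definition index_set :: "nat \<Rightarrow> nat \<Rightarrow> idx set" where
  "index_set c d = {(is, j). length is = d \<and> (\<forall>i\<in>set is. 1 \<le> i) \<and> 1 \<le> j \<and> j \<le> c}"

definition free_ab :: "idx set \<Rightarrow> (idx \<Rightarrow> int) set" where
  "free_ab I = {v. finite {x. v x \<noteq> 0} \<and> {x. v x \<noteq> 0} \<subseteq> I}"

definition is_lattice :: "idx set \<Rightarrow> (idx \<Rightarrow> int) set \<Rightarrow> bool" where
  "is_lattice I L \<longleftrightarrow> L \<subseteq> free_ab I \<and> 0 \<in> L \<and>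
     (\<forall>u\<in>L. \<forall>v\<in>L. u + v \<in> L) \<and> (\<forall>u\<in>L. - u \<in> L)"

text \<open>Sym: permutations of N = {1,2,...} fixing all but finitely many elements
  (encoded as bijections of nat fixing 0).\<close>
definition Sym :: "(nat \<Rightarrow> nat) set" where
  "Sym = {\<sigma>. bij \<sigma> \<and> \<sigma> 0 = 0 \<and> finite {i. \<sigma> i \<noteq> i}}"

text \<open>Linear extension of sigma(e_{(i1..id),j}) = e_{(sigma i1,..,sigma id),j}:
  (sigma v)(sigma i, j) = v(i, j).\<close>
definition sym_act :: "(nat \<Rightarrow> nat) \<Rightarrow> (idx \<Rightarrow> int) \<Rightarrow> (idx \<Rightarrow> int)" where
  "sym_act \<sigma> v = (\<lambda>(is, j). v (map (inv \<sigma>) is, j))"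

definition sym_invariant :: "(idx \<Rightarrow> int) set \<Rightarrow> bool" where
  "sym_invariant L \<longleftrightarrow> (\<forall>\<sigma>\<in>Sym. sym_act \<sigma> ` L \<subseteq> L)"

definition int_span :: "(idx \<Rightarrow> int) set \<Rightarrow> (idx \<Rightarrow> int) set" where
  "int_span S = {v. \<exists>F a. finite F \<and> F \<subseteq> S \<and> v = (\<Sum>u\<in>F. (\<lambda>x. a u * u x))}"

definition Sym_orbit :: "(idx \<Rightarrow> int) set \<Rightarrow> (idx \<Rightarrow> int) set" where
  "Sym_orbit B = {sym_act \<sigma> u | \<sigma> u. \<sigma> \<in> Sym \<and> u \<in> B}"

end

theory Submission
  imports Defs "HOL.Modules" "HOL-Combinatorics.Permutations" "HOL-Library.FuncSet"
    "HOL-Library.Infinite_Set" "HOL-Library.List_Lenlexorder" "HOL-Library.Product_Lexorder"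
begin

text \<open>Order the indices length-lexicographically in the multi-index, then by colour: a well-order
  preserved by every strictly increasing map \<open>\<pi> : \<nat> \<rightarrow> \<nat>\<close>. On the finitely many numbers
  occurring in the support of a single vector such a \<open>\<pi>\<close> agrees with some \<open>\<sigma> \<in> Sym\<close>, so
  Sym-invariance moves an element of \<open>L\<close> with leading index \<open>a\<close> to one with leading index \<open>\<pi>(a)\<close>
  and the same leading coefficient. Write \<open>a \<preceq> b\<close> if \<open>b = \<pi>(a)\<close> for such a \<open>\<pi>\<close>. Then the least
  absolute leading coefficient \<open>m(b)\<close> at an index \<open>b\<close> is antitone in \<open>b\<close>, and by division with
  remainder it divides every leading coefficient at \<open>b\<close>. On \<open>\<nat>\<^sup>d \<times> [c]\<close>, the order \<open>\<preceq>\<close> refined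
  by \<open>m\<close> is a well-quasi-order (Dickson's lemma applied to the pairwise gaps between entries), so finitely
  many leading indices \<open>a\<^sub>i\<close> dominate all others with equal \<open>m\<close>. Elements of \<open>L\<close> realising
  \<open>m(a\<^sub>i)\<close> at \<open>a\<^sub>i\<close> form \<open>B\<close>; division by Sym-translates of \<open>B\<close>, by induction on the leading
  index, expresses every element of \<open>L\<close> through \<open>Sym(B)\<close>.\<close>

definition supp :: "('a \<Rightarrow> 'b::zero) \<Rightarrow> 'a set" where
  "supp v = {x. v x \<noteq> 0}"

text \<open>On \<^typ>\<open>idx\<close>, \<open>Max\<close> refers to the well-order of \<^theory>\<open>HOL-Library.List_Lenlexorder\<close>
  and \<^theory>\<open>HOL-Library.Product_Lexorder\<close>: multi-indices are compared length-lexicographically,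
  ties are broken by the colour.\<close>
definition lead :: "('a::linorder \<Rightarrow> 'b::zero) \<Rightarrow> 'a" where
  "lead v = Max (supp v)"

lemma le_lead: "finite (supp v) \<Longrightarrow> v x \<noteq> 0 \<Longrightarrow> x \<le> lead v"
  unfolding lead_def by (rule Max_ge) (auto simp: supp_def)

lemma lead_nonzero: "finite (supp v) \<Longrightarrow> v \<noteq> 0 \<Longrightarrow> v (lead v) \<noteq> 0"
  unfolding lead_def using Max_in[of "supp v"] by (auto simp: supp_def fun_eq_iff)

lemma lead_eqI: "finite (supp v) \<Longrightarrow> v b \<noteq> 0 \<Longrightarrow> supp v \<subseteq> {..b} \<Longrightarrow> lead v = b"
  unfolding lead_def by (rule Max_eqI) (auto simp: supp_def)

lemma supp_diff_scale:
  fixes v u :: "'a \<Rightarrow> int"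
  shows "supp (v - (\<lambda>x. q * u x)) \<subseteq> supp v \<union> supp u"
  by (auto simp: supp_def)

lemma map_strict_mono_less_iff:
  fixes \<pi> :: "'a::linorder \<Rightarrow> 'b::linorder"
  assumes "strict_mono \<pi>"
  shows "map \<pi> xs < map \<pi> ys \<longleftrightarrow> xs < ys"
proof (induction xs arbitrary: ys)
  case Nil
  then show ?case by (cases ys) auto
next
  case (Cons x xs)
  then show ?case
    by (cases ys) (auto simp: Cons_less_Cons strict_mono_less[OF assms] strict_mono_eq[OF assms])
qed

lemma map_strict_mono_idx_le_iff:
  fixes \<pi> :: "nat \<Rightarrow> nat"
  assumes "strict_mono \<pi>"
  shows "(map \<pi> xs, j) \<le> (map \<pi> ys, k) \<longleftrightarrow> (xs, j) \<le> (ys, k)"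
  using map_strict_mono_less_iff[OF assms] strict_mono_imp_inj_on[OF assms]
  by (auto simp: inj_map_eq_map le_less)

section \<open>Integer spans and division by leading coefficients\<close>

interpretation int_vec: module "\<lambda>(q::int) (v::'a \<Rightarrow> int) x. q * v x"
  by unfold_locales (auto simp: fun_eq_iff algebra_simps)

lemma int_span_eq_span: "int_span S = int_vec.span S"
  unfolding int_span_def int_vec.span_explicit by auto

lemma subspace_if_lattice:
  assumes "is_lattice I L"
  shows "int_vec.subspace L"
proof -
  have nat_mult: "(\<lambda>x. int n * v x) \<in> L" if "v \<in> L" for n v
  proof (induction n)
    case 0
    then show ?case using assms by (simp add: is_lattice_def zero_fun_def)
  next
    case (Suc n)
    have "(\<lambda>x. int (Suc n) * v x) = (\<lambda>x. int n * v x) + v"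
      by (simp add: fun_eq_iff algebra_simps)
    then show ?case using assms Suc that by (simp add: is_lattice_def)
  qed
  have "(\<lambda>x. q * v x) \<in> L" if "v \<in> L" for q v
  proof (cases "0 \<le> q")
    case True
    then show ?thesis using nat_mult[OF that, of "nat q"] by simp
  next
    case False
    then have "(\<lambda>x. q * v x) = - (\<lambda>x. int (nat (- q)) * v x)" by (simp add: fun_eq_iff)
    moreover have "- (\<lambda>x. int (nat (- q)) * v x) \<in> L"
      using nat_mult[OF that, of "nat (- q)"] assms unfolding is_lattice_def by blast
    ultimately show ?thesis by simp
  qed
  then show ?thesis using assms by (simp add: int_vec.subspace_def is_lattice_def)
qed

lemma subset_span_if_lead_coeffs_divide:
  fixes L S :: "('a::wellorder \<Rightarrow> int) set"
  assumes L: "int_vec.subspace L" "\<And>v. v \<in> L \<Longrightarrow> finite (supp v)" and "S \<subseteq> L"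
    and divides: "\<And>v. v \<in> L \<Longrightarrow> v \<noteq> 0 \<Longrightarrow>
      \<exists>u\<in>S. lead u = lead v \<and> u (lead v) dvd v (lead v)"
  shows "L \<subseteq> int_vec.span S"
proof -
  have "v \<in> int_vec.span S" if "v \<in> L" "v \<noteq> 0" "lead v = b" for v b
    using that
  proof (induction b arbitrary: v rule: less_induct)
    case (less b)
    obtain u where u: "u \<in> S" "lead u = b" "u b dvd v b"
      using divides[OF less.prems(1,2)] less.prems(3) by blast
    define q where "q = v b div u b"
    define z where "z = v - (\<lambda>x. q * u x)"
    have "u \<in> L" using u(1) \<open>S \<subseteq> L\<close> by blast
    have "z \<in> L"
      unfolding z_def using L(1) less.prems(1) \<open>u \<in> L\<close>
      by (intro int_vec.subspace_diff int_vec.subspace_scale)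
    have "z b = 0"
      using u(3) by (simp add: z_def q_def)
    have "supp z \<subseteq> {..b}"
      using supp_diff_scale[of v q u] le_lead[OF L(2)[OF less.prems(1)]]
        le_lead[OF L(2)[OF \<open>u \<in> L\<close>]] less.prems(3) u(2)
      unfolding z_def by (auto simp: supp_def)
    have "z \<in> int_vec.span S"
    proof (cases "z = 0")
      case True
      then show ?thesis by (simp add: int_vec.span_zero)
    next
      case False
      have "lead z \<le> b" "z (lead z) \<noteq> 0"
        using \<open>supp z \<subseteq> {..b}\<close> lead_nonzero[OF L(2)[OF \<open>z \<in> L\<close>] False]
        by (auto simp: supp_def)
      then have "lead z < b" using \<open>z b = 0\<close> by (auto simp: le_less)
      then show ?thesis using less.IH \<open>z \<in> L\<close> False by blast
    qed
    moreover have "v = z + (\<lambda>x. q * u x)" by (simp add: z_def)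
    ultimately show ?case
      using int_vec.span_add int_vec.span_scale int_vec.span_base[OF u(1)] by metis
  qed
  then show ?thesis using int_vec.span_zero by blast
qed

section \<open>Sym acts like increasing maps on single vectors\<close>

lemma Sym_extends_inj_on:
  fixes \<pi> :: "nat \<Rightarrow> nat"
  assumes "finite U" "inj_on \<pi> U" "0 \<notin> U" "0 \<notin> \<pi> ` U"
  shows "\<exists>\<sigma>\<in>Sym. \<forall>u\<in>U. \<sigma> u = \<pi> u"
proof -
  have "card (\<pi> ` U - U) = card (\<pi> ` U) - card (U \<inter> \<pi> ` U)"
    using assms(1) by (simp add: card_Diff_subset_Int Int_commute)
  also have "\<dots> = card (U - \<pi> ` U)"
    using assms(1) card_image[OF assms(2)] by (simp add: card_Diff_subset_Int)
  finally have "card (\<pi> ` U - U) = card (U - \<pi> ` U)" .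
  then obtain h where h: "bij_betw h (\<pi> ` U - U) (U - \<pi> ` U)"
    using finite_same_card_bij[of "\<pi> ` U - U" "U - \<pi> ` U"] assms(1) by blast
  define \<sigma> where "\<sigma> x = (if x \<in> U then \<pi> x else if x \<in> \<pi> ` U then h x else x)" for x
  have "bij_betw \<sigma> U (\<pi> ` U)"
    by (rule bij_betw_cong[of U \<pi> \<sigma>, THEN iffD1])
      (use assms(2) in \<open>auto simp: \<sigma>_def bij_betw_def\<close>)
  moreover have "bij_betw \<sigma> (\<pi> ` U - U) (U - \<pi> ` U)"
    using bij_betw_cong[of "\<pi> ` U - U" \<sigma> h] h by (simp add: \<sigma>_def)
  ultimately have "bij_betw \<sigma> (U \<union> (\<pi> ` U - U)) (\<pi> ` U \<union> (U - \<pi> ` U))"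
    by (rule bij_betw_combine) auto
  then have "bij_betw \<sigma> (U \<union> \<pi> ` U) (U \<union> \<pi> ` U)"
    by (simp add: Un_Diff_cancel Un_commute)
  moreover have fix_outside: "\<sigma> x = x" if "x \<notin> U \<union> \<pi> ` U" for x
    using that by (simp add: \<sigma>_def)
  ultimately have "\<sigma> permutes (U \<union> \<pi> ` U)"
    using bij_imp_permutes by blast
  moreover have "finite {i. \<sigma> i \<noteq> i}"
    using fix_outside assms(1) by (auto intro: finite_subset[of _ "U \<union> \<pi> ` U"])
  ultimately have "\<sigma> \<in> Sym"
    using permutes_bij fix_outside assms(3,4) unfolding Sym_def by blast
  moreover have "\<forall>u\<in>U. \<sigma> u = \<pi> u" by (simp add: \<sigma>_def)
  ultimately show ?thesis by blast
qed

lemma Sym_inv_apply: "\<sigma> \<in> Sym \<Longrightarrow> inv \<sigma> (\<sigma> x) = x"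
  and Sym_apply_inv: "\<sigma> \<in> Sym \<Longrightarrow> \<sigma> (inv \<sigma> x) = x"
  unfolding Sym_def by (auto simp: bij_is_inj bij_is_surj surj_f_inv_f)

lemma sym_act_agreeing_with_inj:
  assumes "\<sigma> \<in> Sym" "inj \<pi>"
    and agree: "\<And>y i. v y \<noteq> 0 \<Longrightarrow> i \<in> set (fst y) \<Longrightarrow> \<sigma> i = \<pi> i"
  shows sym_act_map_apply: "sym_act \<sigma> v (map \<pi> xs, j) = v (xs, j)"
    and supp_sym_act: "supp (sym_act \<sigma> v) \<subseteq> (\<lambda>(ys, k). (map \<pi> ys, k)) ` supp v"
proof -
  have map_agree: "map \<sigma> ys = map \<pi> ys" if "v (ys, k) \<noteq> 0" for ys k
    using agree[OF that] by simp
  let ?ys = "map (inv \<sigma>) (map \<pi> xs)"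
  have "?ys = xs" if "v (?ys, j) \<noteq> 0 \<or> v (xs, j) \<noteq> 0"
    using that
  proof
    assume "v (?ys, j) \<noteq> 0"
    then have "map \<pi> ?ys = map \<pi> xs"
      using map_agree[of ?ys j] Sym_apply_inv[OF assms(1)] by (simp add: comp_def map_idI)
    then show ?thesis using inj_map_eq_map[OF \<open>inj \<pi>\<close>] by blast
  next
    assume "v (xs, j) \<noteq> 0"
    then show ?thesis
      using map_agree[of xs j, symmetric] Sym_inv_apply[OF assms(1)] by (simp add: comp_def map_idI)
  qed
  then have "v (?ys, j) = v (xs, j)" by metis
  then show "sym_act \<sigma> v (map \<pi> xs, j) = v (xs, j)"
    by (simp add: sym_act_def)
  show "supp (sym_act \<sigma> v) \<subseteq> (\<lambda>(ys, k). (map \<pi> ys, k)) ` supp v"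
  proof
    fix x assume "x \<in> supp (sym_act \<sigma> v)"
    then obtain xs k where x: "x = (xs, k)" "v (map (inv \<sigma>) xs, k) \<noteq> 0"
      by (cases x) (auto simp: supp_def sym_act_def)
    moreover have "xs = map \<pi> (map (inv \<sigma>) xs)"
      using map_agree[OF x(2)] Sym_apply_inv[OF assms(1)] by (simp add: comp_def map_idI)
    ultimately show "x \<in> (\<lambda>(ys, k). (map \<pi> ys, k)) ` supp v"
      by (auto simp: supp_def intro!: image_eqI[of _ _ "(map (inv \<sigma>) xs, k)"])
  qed
qed

lemma lead_sym_act_strict_mono:
  fixes \<pi> :: "nat \<Rightarrow> nat"
  assumes "v \<in> free_ab (index_set c d)" "v \<noteq> 0" "strict_mono \<pi>" "lead v = (xs, j)"
  shows "\<exists>\<sigma>\<in>Sym. lead (sym_act \<sigma> v) = (map \<pi> xs, j) \<and>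
    sym_act \<sigma> v (map \<pi> xs, j) = v (xs, j)"
proof -
  have fin: "finite (supp v)" and "supp v \<subseteq> index_set c d"
    using assms(1) by (auto simp: free_ab_def supp_def)
  define U where "U = (\<Union>y\<in>supp v. set (fst y))"
  have "finite U" "0 \<notin> U"
    using fin \<open>supp v \<subseteq> index_set c d\<close> by (force simp: U_def index_set_def)+
  moreover have "0 \<notin> \<pi> ` U"
    using \<open>0 \<notin> U\<close> strict_mono_imp_increasing[OF assms(3)] by (metis image_iff le_0_eq)
  moreover have inj: "inj \<pi>"
    using strict_mono_imp_inj_on[OF assms(3)] .
  ultimately obtain \<sigma> where \<sigma>: "\<sigma> \<in> Sym" "\<forall>u\<in>U. \<sigma> u = \<pi> u"
    using Sym_extends_inj_on[of U \<pi>] inj_on_subset by blast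
  have agree: "\<sigma> i = \<pi> i" if "v y \<noteq> 0" "i \<in> set (fst y)" for y i
    using \<sigma>(2) that by (cases y) (auto simp: U_def supp_def)
  define w where "w = sym_act \<sigma> v"
  have w_apply: "w (map \<pi> ys, k) = v (ys, k)" for ys k
    unfolding w_def by (rule sym_act_map_apply[OF \<sigma>(1) inj agree])
  have supp_w: "supp w \<subseteq> (\<lambda>(ys, k). (map \<pi> ys, k)) ` supp v"
    unfolding w_def by (rule supp_sym_act[OF \<sigma>(1) inj agree])
  have "lead w = (map \<pi> xs, j)"
  proof (rule lead_eqI)
    show "finite (supp w)"
      using supp_w fin finite_surj by blast
    show "w (map \<pi> xs, j) \<noteq> 0"
      using lead_nonzero[OF fin assms(2)] assms(4) w_apply by simp
    show "supp w \<subseteq> {..(map \<pi> xs, j)}"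
    proof
      fix x assume "x \<in> supp w"
      then obtain ys k where "x = (map \<pi> ys, k)" "v (ys, k) \<noteq> 0"
        using supp_w by (auto simp: supp_def)
      then show "x \<in> {..(map \<pi> xs, j)}"
        using le_lead[OF fin] assms(4) map_strict_mono_idx_le_iff[OF assms(3)] by fastforce
    qed
  qed
  then show ?thesis using \<sigma>(1) w_apply unfolding w_def by blast
qed

definition inc_le :: "idx \<Rightarrow> idx \<Rightarrow> bool" where
  "inc_le a b \<longleftrightarrow> (\<exists>\<pi>::nat \<Rightarrow> nat. strict_mono \<pi> \<and> b = (map \<pi> (fst a), snd a))"

lemma lead_sym_act_inc_le:
  assumes "v \<in> free_ab (index_set c d)" "v \<noteq> 0" "inc_le (lead v) b"
  shows "\<exists>u\<in>Sym_orbit {v}. lead u = b \<and> u b = v (lead v)"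
proof -
  obtain \<pi> :: "nat \<Rightarrow> nat" where "strict_mono \<pi>" "b = (map \<pi> (fst (lead v)), snd (lead v))"
    using assms(3) unfolding inc_le_def by blast
  then show ?thesis
    using lead_sym_act_strict_mono[OF assms(1,2), of \<pi> "fst (lead v)" "snd (lead v)"]
    unfolding Sym_orbit_def by auto
qed

section \<open>A well-quasi-order on indices\<close>

lemma strict_mono_map_exists:
  fixes xs ys :: "nat list"
  assumes "length xs = length ys"
    and le: "\<And>p. p < length xs \<Longrightarrow> xs ! p \<le> ys ! p"
    and gap: "\<And>p q. p < length xs \<Longrightarrow> q < length xs \<Longrightarrow> xs ! p \<le> xs ! q \<Longrightarrow>
      xs ! q + ys ! p \<le> ys ! q + xs ! p"
  shows "\<exists>\<pi>. strict_mono \<pi> \<and> map \<pi> xs = ys"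
proof -
  define shift where
    "shift n = Max (insert 0 ((\<lambda>p. ys ! p - xs ! p) ` {p. p < length xs \<and> xs ! p \<le> n}))" for n
  define \<pi> where "\<pi> n = n + shift n" for n
  have "shift n \<le> shift (Suc n)" for n
    unfolding shift_def by (rule Max_mono) auto
  then have "strict_mono \<pi>"
    by (simp add: \<pi>_def strict_mono_Suc_iff le_imp_less_Suc)
  moreover have "\<pi> (xs ! q) = ys ! q" if q: "q < length xs" for q
  proof -
    have "shift (xs ! q) = ys ! q - xs ! q"
      unfolding shift_def
    proof (rule Max_eqI)
      fix y assume "y \<in> insert 0 ((\<lambda>p. ys ! p - xs ! p) ` {p. p < length xs \<and> xs ! p \<le> xs ! q})"
      then consider "y = 0" | p where "p < length xs" "xs ! p \<le> xs ! q" "y = ys ! p - xs ! p"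
        by auto
      then show "y \<le> ys ! q - xs ! q"
      proof cases
        case 2
        then show ?thesis using gap[OF 2(1) q 2(2)] le[OF 2(1)] le[OF q] by linarith
      qed simp
    qed (use q in auto)
    then show ?thesis using le[OF q] by (simp add: \<pi>_def)
  qed
  ultimately show ?thesis using assms(1) by (auto intro!: nth_equalityI)
qed

lemma nat_seq_has_mono_subseq:
  fixes s :: "nat \<Rightarrow> nat"
  shows "\<exists>g :: nat \<Rightarrow> nat. strict_mono g \<and> (\<forall>i j. i \<le> j \<longrightarrow> s (g i) \<le> s (g j))"
proof -
  define M where "M = {n. \<forall>m\<ge>n. s n \<le> s m}"
  have "infinite M"
    unfolding infinite_nat_iff_unbounded_le
  proof
    fix m
    obtain n where "m \<le> n" "\<forall>k. m \<le> k \<longrightarrow> s n \<le> s k"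
      using ex_has_least_nat[of "\<lambda>k. m \<le> k" m s] by auto
    then show "\<exists>n\<ge>m. n \<in> M" unfolding M_def by auto
  qed
  then have "strict_mono (enumerate M)" by (rule strict_mono_enumerate)
  moreover have "s (enumerate M i) \<le> s (enumerate M j)" if "i \<le> j" for i j
    using enumerate_in_set[OF \<open>infinite M\<close>, of i]
      strict_mono_less_eq[OF \<open>strict_mono (enumerate M)\<close>] that
    unfolding M_def by blast
  ultimately show ?thesis by blast
qed

lemma dickson_subseq:
  fixes x :: "nat \<Rightarrow> 'k \<Rightarrow> nat"
  assumes "finite K"
  shows "\<exists>h :: nat \<Rightarrow> nat. strict_mono h \<and>
    (\<forall>i j. i \<le> j \<longrightarrow> (\<forall>k\<in>K. x (h i) k \<le> x (h j) k))"
  using assms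
proof (induction K rule: finite_induct)
  case empty
  show ?case using strict_mono_on_id[of UNIV] by blast
next
  case (insert k0 K)
  then obtain h :: "nat \<Rightarrow> nat"
    where h: "strict_mono h" "\<forall>i j. i \<le> j \<longrightarrow> (\<forall>k\<in>K. x (h i) k \<le> x (h j) k)"
    by blast
  obtain g :: "nat \<Rightarrow> nat"
    where g: "strict_mono g" "\<forall>i j. i \<le> j \<longrightarrow> x (h (g i)) k0 \<le> x (h (g j)) k0"
    using nat_seq_has_mono_subseq[of "\<lambda>n. x (h n) k0"] by blast
  have "strict_mono (h \<circ> g)"
    using h(1) g(1) by (simp add: strict_mono_def)
  moreover have "\<forall>i j. i \<le> j \<longrightarrow> (\<forall>k\<in>insert k0 K. x ((h \<circ> g) i) k \<le> x ((h \<circ> g) j) k)"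
    using g h(2) strict_mono_less_eq[OF g(1)] by auto
  ultimately show ?case by blast
qed

lemma dickson_good_pair:
  fixes x :: "nat \<Rightarrow> 'k \<Rightarrow> nat"
  assumes "finite K" "finite (range f)"
  shows "\<exists>i j. i < j \<and> f i = f j \<and> (\<forall>k\<in>K. x i k \<le> x j k)"
proof -
  obtain h :: "nat \<Rightarrow> nat"
    where h: "strict_mono h" "\<forall>i j. i \<le> j \<longrightarrow> (\<forall>k\<in>K. x (h i) k \<le> x (h j) k)"
    using dickson_subseq[OF assms(1)] by blast
  have "finite (range (f \<circ> h))"
    using assms(2) by (rule finite_subset[rotated]) auto
  then have "\<not> inj (f \<circ> h)"
    using finite_imageD infinite_UNIV_nat by blast
  then obtain i j where "i < j" "f (h i) = f (h j)"
    unfolding inj_def by (metis comp_apply linorder_neqE_nat)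
  then show ?thesis
    using h strict_mono_less[OF h(1)] by (metis less_imp_le)
qed

lemma inc_le_good:
  fixes b :: "nat \<Rightarrow> idx" and e :: "nat \<Rightarrow> nat"
  assumes "\<And>n. length (fst (b n)) = d" and "finite (range (\<lambda>n. snd (b n)))"
  shows "\<exists>i j. i < j \<and> inc_le (b i) (b j) \<and> e i \<le> e j"
proof -
  txt \<open>Prepending \<open>0\<close> makes the pairwise gaps record the entries themselves as well; the
    coordinate \<^term>\<open>None\<close> carries the weight \<open>e\<close>.\<close>
  define zs where "zs n = 0 # fst (b n)" for n
  define P where "P = {..d} \<times> {..d}"
  define x where "x n = (\<lambda>k. case k of None \<Rightarrow> e n | Some (p, q) \<Rightarrow> zs n ! q - zs n ! p)" for n
  define f where "f n = (restrict (\<lambda>(p, q). zs n ! p \<le> zs n ! q) P, snd (b n))" for n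
  have "range f \<subseteq> (P \<rightarrow>\<^sub>E (UNIV :: bool set)) \<times> range (\<lambda>n. snd (b n))"
    unfolding f_def by auto
  moreover have "finite ((P \<rightarrow>\<^sub>E (UNIV :: bool set)) \<times> range (\<lambda>n. snd (b n)))"
    using assms(2) by (simp add: P_def finite_PiE)
  ultimately have "finite (range f)" by (rule finite_subset)
  then obtain i j where ij: "i < j" "f i = f j" and x_le: "\<forall>k\<in>insert None (Some ` P). x i k \<le> x j k"
    using dickson_good_pair[of "insert None (Some ` P)" f x] by (auto simp: P_def)
  have gap: "zs i ! q + zs j ! p \<le> zs j ! q + zs i ! p" if "p \<le> d" "q \<le> d" "zs i ! p \<le> zs i ! q" for p q
  proof -
    have "zs j ! p \<le> zs j ! q"
      using fun_cong[OF arg_cong[OF ij(2), of fst], of "(p, q)"] that by (simp add: f_def P_def)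
    moreover have "x i (Some (p, q)) \<le> x j (Some (p, q))"
      using x_le that(1,2) by (simp add: P_def)
    ultimately show ?thesis using that(3) by (simp add: x_def)
  qed
  have "\<exists>\<pi>. strict_mono \<pi> \<and> map \<pi> (fst (b i)) = fst (b j)"
  proof (rule strict_mono_map_exists)
    show "length (fst (b i)) = length (fst (b j))" using assms(1) by simp
    show "fst (b i) ! p \<le> fst (b j) ! p" if "p < length (fst (b i))" for p
      using gap[of 0 "Suc p"] that assms(1) by (simp add: zs_def)
    show "fst (b i) ! q + fst (b j) ! p \<le> fst (b j) ! q + fst (b i) ! p"
      if "p < length (fst (b i))" "q < length (fst (b i))" "fst (b i) ! p \<le> fst (b i) ! q" for p q
      using gap[of "Suc p" "Suc q"] that assms(1) by (simp add: zs_def)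
  qed
  moreover have "snd (b i) = snd (b j)" using ij(2) by (simp add: f_def)
  moreover have "e i \<le> e j" using x_le by (simp add: x_def)
  ultimately show ?thesis using ij(1) unfolding inc_le_def by (metis prod.collapse)
qed

lemma finite_basis_if_good:
  assumes good: "\<And>s :: nat \<Rightarrow> 'a. (\<And>n. s n \<in> D) \<Longrightarrow> \<exists>i j. i < j \<and> P (s i) (s j)"
  shows "\<exists>F. finite F \<and> F \<subseteq> D \<and> (\<forall>b\<in>D. \<exists>a\<in>F. P a b)"
proof (rule ccontr)
  assume no_basis: "\<not> ?thesis"
  define pick where "pick F = (SOME b. b \<in> D \<and> (\<forall>a\<in>F. \<not> P a b))" for F
  have pick: "pick F \<in> D \<and> (\<forall>a\<in>F. \<not> P a (pick F))" if "finite F" "F \<subseteq> D" for F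
  proof -
    have "\<not> (\<forall>b\<in>D. \<exists>a\<in>F. P a b)" using no_basis that by blast
    then have "\<exists>b. b \<in> D \<and> (\<forall>a\<in>F. \<not> P a b)" by blast
    then show ?thesis unfolding pick_def by (rule someI_ex)
  qed
  define A where "A = rec_nat {} (\<lambda>_ F. insert (pick F) F)"
  define s where "s n = pick (A n)" for n
  have A_eq: "A n = s ` {..<n}" for n
    by (induction n) (simp_all add: A_def s_def lessThan_Suc)
  have s_in: "s n \<in> D" for n
  proof (induction n rule: less_induct)
    case (less n)
    then have "finite (A n)" "A n \<subseteq> D" by (auto simp: A_eq)
    then show ?case using pick unfolding s_def by blast
  qed
  have "\<not> P (s i) (s j)" if "i < j" for i j
  proof -
    have "finite (A j)" "A j \<subseteq> D" "s i \<in> A j" using s_in that by (auto simp: A_eq)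
    then show ?thesis using pick unfolding s_def by blast
  qed
  then show False using good[of s, OF s_in] by blast
qed

section \<open>Sym-invariant lattices\<close>

locale sym_lattice =
  fixes c d :: nat and L :: "(idx \<Rightarrow> int) set"
  assumes lattice: "is_lattice (index_set c d) L" and invariant: "sym_invariant L"
begin

lemma in_free_ab: "v \<in> L \<Longrightarrow> v \<in> free_ab (index_set c d)"
  using lattice unfolding is_lattice_def by blast

lemma finite_supp: "v \<in> L \<Longrightarrow> finite (supp v)"
  using in_free_ab unfolding free_ab_def supp_def by blast

lemma Sym_orbit_subset: "B \<subseteq> L \<Longrightarrow> Sym_orbit B \<subseteq> L"
  using invariant unfolding Sym_orbit_def sym_invariant_def by blast

definition leads :: "idx set" where
  "leads = lead ` (L - {0})"

definition min_lead_coeff :: "idx \<Rightarrow> nat" where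
  "min_lead_coeff b = (LEAST n. \<exists>v\<in>L. v \<noteq> 0 \<and> lead v = b \<and> n = nat \<bar>v b\<bar>)"

lemma leads_subset_index_set: "leads \<subseteq> index_set c d"
  using in_free_ab lead_nonzero[OF finite_supp]
  unfolding leads_def free_ab_def by blast

lemma min_lead_coeff_attained:
  assumes "b \<in> leads"
  shows "\<exists>w\<in>L. w \<noteq> 0 \<and> lead w = b \<and> nat \<bar>w b\<bar> = min_lead_coeff b"
proof -
  obtain v where "v \<in> L" "v \<noteq> 0" "lead v = b"
    using assms unfolding leads_def by blast
  then have "\<exists>n. \<exists>v\<in>L. v \<noteq> 0 \<and> lead v = b \<and> n = nat \<bar>v b\<bar>" by blast
  from LeastI_ex[OF this] show ?thesis
    unfolding min_lead_coeff_def by auto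
qed

lemma min_lead_coeff_le: "v \<in> L \<Longrightarrow> v \<noteq> 0 \<Longrightarrow> min_lead_coeff (lead v) \<le> nat \<bar>v (lead v)\<bar>"
  unfolding min_lead_coeff_def by (rule Least_le) blast

text \<open>Division with remainder: a nonzero remainder would be a smaller leading coefficient at the
  same index.\<close>
lemma min_lead_coeff_dvd:
  assumes "v \<in> L" "v \<noteq> 0"
  shows "int (min_lead_coeff (lead v)) dvd v (lead v)"
proof -
  let ?b = "lead v"
  obtain w where w: "w \<in> L" "w \<noteq> 0" "lead w = ?b" "nat \<bar>w ?b\<bar> = min_lead_coeff ?b"
    using min_lead_coeff_attained assms unfolding leads_def by blast
  have "w ?b \<noteq> 0"
    using lead_nonzero[OF finite_supp[OF w(1)] w(2)] w(3) by simp
  define q where "q = v ?b div w ?b"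
  define z where "z = v - (\<lambda>x. q * w x)"
  have "z \<in> L"
    unfolding z_def using subspace_if_lattice[OF lattice] assms(1) w(1)
    by (intro int_vec.subspace_diff int_vec.subspace_scale)
  have z_lead: "z ?b = v ?b mod w ?b"
    by (simp add: z_def q_def) (metis minus_div_mult_eq_mod)
  have "z ?b = 0"
  proof (rule ccontr)
    assume "z ?b \<noteq> 0"
    have "supp z \<subseteq> {..?b}"
      using supp_diff_scale[of v q w] le_lead[OF finite_supp[OF assms(1)]]
        le_lead[OF finite_supp[OF w(1)]] w(3) unfolding z_def by (auto simp: supp_def)
    then have "lead z = ?b"
      using lead_eqI[OF finite_supp[OF \<open>z \<in> L\<close>] \<open>z ?b \<noteq> 0\<close>] by blast
    then have "min_lead_coeff ?b \<le> nat \<bar>z ?b\<bar>"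
      using min_lead_coeff_le[OF \<open>z \<in> L\<close>] \<open>z ?b \<noteq> 0\<close> by force
    moreover have "\<bar>z ?b\<bar> < \<bar>w ?b\<bar>"
      using z_lead abs_mod_less[OF \<open>w ?b \<noteq> 0\<close>] by simp
    ultimately show False using w(4) by linarith
  qed
  then have "w ?b dvd v ?b"
    using z_lead by (simp add: dvd_eq_mod_eq_0)
  moreover have "int (min_lead_coeff ?b) = \<bar>w ?b\<bar>"
    using w(4) by simp
  ultimately show ?thesis by simp
qed

lemma min_lead_coeff_antimono:
  assumes "a \<in> leads" "inc_le a b"
  shows "b \<in> leads \<and> min_lead_coeff b \<le> min_lead_coeff a"
proof -
  obtain w where w: "w \<in> L" "w \<noteq> 0" "lead w = a" "nat \<bar>w a\<bar> = min_lead_coeff a"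
    using min_lead_coeff_attained[OF assms(1)] by blast
  obtain u where u: "u \<in> Sym_orbit {w}" "lead u = b" "u b = w a"
    using lead_sym_act_inc_le[OF in_free_ab[OF w(1)] w(2)] assms(2) w(3) by blast
  have "u \<in> L" using u(1) Sym_orbit_subset w(1) by blast
  moreover have "u \<noteq> 0"
    using u(3) lead_nonzero[OF finite_supp[OF w(1)] w(2)] w(3) by auto
  ultimately show ?thesis
    using min_lead_coeff_le[of u] u(2,3) w(4) unfolding leads_def by auto
qed

lemma finite_lead_basis:
  "\<exists>F. finite F \<and> F \<subseteq> leads \<and>
    (\<forall>b\<in>leads. \<exists>a\<in>F. inc_le a b \<and> min_lead_coeff a = min_lead_coeff b)"
proof (rule finite_basis_if_good)
  fix s :: "nat \<Rightarrow> idx" assume s: "\<And>n. s n \<in> leads"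
  have "length (fst (s n)) = d \<and> snd (s n) \<le> c" for n
    using s[of n] leads_subset_index_set by (cases "s n") (auto simp: index_set_def)
  then have "\<And>n. length (fst (s n)) = d" "range (\<lambda>n. snd (s n)) \<subseteq> {..c}"
    by auto
  then obtain i j where "i < j" "inc_le (s i) (s j)" "min_lead_coeff (s i) \<le> min_lead_coeff (s j)"
    using inc_le_good[of s d "\<lambda>n. min_lead_coeff (s n)"] finite_subset by blast
  then show "\<exists>i j. i < j \<and> inc_le (s i) (s j) \<and> min_lead_coeff (s i) = min_lead_coeff (s j)"
    using min_lead_coeff_antimono[OF s] by (metis le_antisym)
qed

lemma lead_dvd_by_Sym_translate:
  assumes "w \<in> L" "w \<noteq> 0" "nat \<bar>w (lead w)\<bar> = min_lead_coeff (lead w)"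
    and "v \<in> L" "v \<noteq> 0" "inc_le (lead w) (lead v)"
    and "min_lead_coeff (lead w) = min_lead_coeff (lead v)"
  shows "\<exists>u\<in>Sym_orbit {w}. lead u = lead v \<and> u (lead v) dvd v (lead v)"
proof -
  obtain u where u: "u \<in> Sym_orbit {w}" "lead u = lead v" "u (lead v) = w (lead w)"
    using lead_sym_act_inc_le[OF in_free_ab[OF assms(1)] assms(2,6)] by blast
  have "int (min_lead_coeff (lead v)) = \<bar>u (lead v)\<bar>"
    using u(3) assms(3)[symmetric] assms(7)[symmetric] by simp
  then show ?thesis
    using u(1,2) min_lead_coeff_dvd[OF assms(4,5)] by auto
qed

lemma finite_equivariant_generators: "\<exists>B. finite B \<and> B \<subseteq> L \<and> L = int_span (Sym_orbit B)"
proof -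
  obtain F where F: "finite F" "F \<subseteq> leads"
    "\<And>b. b \<in> leads \<Longrightarrow> \<exists>a\<in>F. inc_le a b \<and> min_lead_coeff a = min_lead_coeff b"
    using finite_lead_basis by blast
  have "\<forall>a\<in>F. \<exists>w. w \<in> L \<and> w \<noteq> 0 \<and> lead w = a \<and> nat \<bar>w a\<bar> = min_lead_coeff a"
    using min_lead_coeff_attained F(2) by blast
  then obtain w where w: "\<And>a. a \<in> F \<Longrightarrow>
      w a \<in> L \<and> w a \<noteq> 0 \<and> lead (w a) = a \<and> nat \<bar>w a a\<bar> = min_lead_coeff a"
    by (metis bchoice)
  then have "w ` F \<subseteq> L" by blast
  have "\<exists>u\<in>Sym_orbit (w ` F). lead u = lead v \<and> u (lead v) dvd v (lead v)"
    if "v \<in> L" "v \<noteq> 0" for v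
  proof -
    have "lead v \<in> leads" using that unfolding leads_def by blast
    then obtain a where a: "a \<in> F" "inc_le a (lead v)" "min_lead_coeff a = min_lead_coeff (lead v)"
      using F(3) by blast
    moreover have "Sym_orbit {w a} \<subseteq> Sym_orbit (w ` F)"
      using a(1) unfolding Sym_orbit_def by blast
    ultimately show ?thesis
      using lead_dvd_by_Sym_translate[of "w a" v] w[OF a(1)] that by auto
  qed
  then have "L \<subseteq> int_span (Sym_orbit (w ` F))"
    unfolding int_span_eq_span
    using subset_span_if_lead_coeffs_divide[OF subspace_if_lattice[OF lattice] finite_supp
        Sym_orbit_subset[OF \<open>w ` F \<subseteq> L\<close>]] by blast
  moreover have "int_span (Sym_orbit (w ` F)) \<subseteq> L"
    unfolding int_span_eq_span using Sym_orbit_subset[OF \<open>w ` F \<subseteq> L\<close>]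
    by (rule int_vec.span_minimal) (rule subspace_if_lattice[OF lattice])
  ultimately show ?thesis using F(1) \<open>w ` F \<subseteq> L\<close> by blast
qed

end

theorem theorem5p1:
  fixes c d :: nat and L :: "(idx \<Rightarrow> int) set"
  assumes "1 \<le> c" and "1 \<le> d"
    and "is_lattice (index_set c d) L"
    and "sym_invariant L"
  shows "\<exists>B. finite B \<and> B \<subseteq> L \<and> L = int_span (Sym_orbit B)"
proof -
  interpret sym_lattice c d L
    using assms(3,4) by unfold_locales
  show ?thesis by (rule finite_equivariant_generators)
qed

end
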